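(* Let $X$ be a compact metric space and $F\colon X\to 2^X$ a set-valued mapping with the specification property. Then the set-valued map $\gamma\colon\varprojlim F\to 2^{\varprojlim F}$ has the specification property.
   Context: $d$ is the metric on $X$; $2^Y$ is the space of nonempty closed subsets of $Y$; a set-valued mapping is an upper semicontinuous $F\colon X\to 2^X$. The inverse limit is $\varprojlim F=\{(x_0,x_1,\dots)\in X^{\mathbb{N}}: x_i\in F(x_{i+1})\text{ for all } i\}$ with the product topology (and any compatible metric). $\gamma$ is defined by $\gamma((x_0,x_1,\dots))=\{(x_{-1},x_0,x_1,\dots): x_{-1}\in F(x_0)\}$. For a set-valued map $G$ on a compact metric space $(Y,\rho)$, an orbit of $y$ is a sequence $(y_j)_{j=0}^\infty$ with $y_0=y$, $y_{j+1}\in G(y_j)$, and $G$ has the specification property if for every $\epsilon>0$ there is $M\in\mathbb{N}$ such that for any $n$, any $y^1,\dots,y^n\in Y$, any integers $0\le a_1\le b_1<a_2\le\dots<a_n\le b_n$ with $a_{i+1}-b_i>M$, any orbits $(y^i_j)_{j=0}^\infty$ of the $y^i$, and any $P>M+b_n-a_1$, there is $z\in Y$ with an orbit $(z_j)_{j=0}^\infty$ such that $\rho(z_j,y^i_j)<\epsilon$ for $1\le i\le n$, $a_i\le j\le b_i$, and $z_P=z$. *)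

theory Defs
  imports "HOL-Analysis.Analysis"
begin

definition usc_setvalued :: "'a::metric_space set \<Rightarrow> ('a \<Rightarrow> 'a set) \<Rightarrow> bool" where
  "usc_setvalued X F \<longleftrightarrow>
     (\<forall>x\<in>X. F x \<subseteq> X \<and> F x \<noteq> {} \<and> closed (F x)) \<and>
     (\<forall>x\<in>X. \<forall>U. open U \<and> F x \<subseteq> U \<longrightarrow>
        (\<exists>V. open V \<and> x \<in> V \<and> (\<forall>y\<in>X \<inter> V. F y \<subseteq> U)))"

definition inv_lim :: "'a set \<Rightarrow> ('a \<Rightarrow> 'a set) \<Rightarrow> (nat \<Rightarrow> 'a) set" where
  "inv_lim X F = {x. (\<forall>i. x i \<in> X) \<and> (\<forall>i. x i \<in> F (x (Suc i)))}"

definition gamma_map :: "('a \<Rightarrow> 'a set) \<Rightarrow> (nat \<Rightarrow> 'a) \<Rightarrow> (nat \<Rightarrow> 'a) set" where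
  "gamma_map F x = {(\<lambda>i. if i = 0 then x' else x (i - 1)) | x'. x' \<in> F (x 0)}"

definition orbit_of :: "('b \<Rightarrow> 'b set) \<Rightarrow> 'b \<Rightarrow> (nat \<Rightarrow> 'b) \<Rightarrow> bool" where
  "orbit_of G y ys \<longleftrightarrow> ys 0 = y \<and> (\<forall>j. ys (Suc j) \<in> G (ys j))"

definition has_specification :: "'b set \<Rightarrow> ('b \<Rightarrow> 'b \<Rightarrow> real) \<Rightarrow> ('b \<Rightarrow> 'b set) \<Rightarrow> bool" where
  "has_specification Y \<rho> G \<longleftrightarrow>
    (\<forall>\<epsilon>>0. \<exists>M::nat. \<forall>(n::nat) (y::nat \<Rightarrow> 'b) (a::nat \<Rightarrow> nat) (b::nat \<Rightarrow> nat)
        (orb::nat \<Rightarrow> nat \<Rightarrow> 'b) (P::nat).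
      n \<ge> 1 \<and> (\<forall>i\<in>{1..n}. y i \<in> Y) \<and>
      (\<forall>i\<in>{1..n}. a i \<le> b i) \<and>
      (\<forall>i. 1 \<le> i \<and> i < n \<longrightarrow> b i < a (Suc i) \<and> a (Suc i) - b i > M) \<and>
      (\<forall>i\<in>{1..n}. orbit_of G (y i) (orb i)) \<and>
      P > M + b n - a 1
      \<longrightarrow> (\<exists>z\<in>Y. \<exists>zs. orbit_of G z zs \<and>
             (\<forall>i\<in>{1..n}. \<forall>j\<in>{a i..b i}. \<rho> (zs j) (orb i j) < \<epsilon>) \<and> zs P = z))"

end

theory Submission
  imports Defs
begin

text \<open>A \<gamma>-orbit of a point y of the inverse limit is a single F-orbit u read backwards: its
  j-th term is (u (j + K), u (j + K - 1), \<dots>), where u first runs down the coordinates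
  y K, \<dots>, y 0 and then through the new coordinates added by \<gamma>. As the inverse limit is
  compact, \<rho> is uniformly controlled by the product metric, which in turn is controlled by
  the first K coordinates. So it suffices to shadow each window [a i, b i] of a \<gamma>-orbit by
  shadowing the window [a i, b i + K] of its unrolled F-orbit, which the specification property
  of F with gap M does once the gaps between the original windows exceed M + K. The resulting P-periodic point gives a P-periodic F-orbit, and
  reading that backwards yields the required periodic \<gamma>-orbit.\<close>

lemma usc_setvalued_closed_graph:
  fixes X :: "'a::metric_space set"
  assumes X: "closed X" and usc: "usc_setvalued X F"
    and xs: "\<And>n. xs n \<in> X" and xl: "xs \<longlonglongrightarrow> x"
    and ys: "\<And>n. ys n \<in> F (xs n)" and yl: "ys \<longlonglongrightarrow> y"
  shows "y \<in> F x"
proof (rule ccontr)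
  assume ny: "y \<notin> F x"
  have xX: "x \<in> X" using closed_sequentially[OF X] xs xl by blast
  have Fx: "closed (F x)" "F x \<noteq> {}" using usc xX by (auto simp: usc_setvalued_def)
  define r where "r = infdist y (F x)"
  have rpos: "r > 0" using ny Fx in_closed_iff_infdist_zero[of "F x" y] infdist_nonneg[of y "F x"]
    unfolding r_def by linarith
  define U where "U = {z. infdist z (F x) < r/2}"
  have oU: "open U" unfolding U_def
    by (intro open_Collect_less continuous_intros)
  have FU: "F x \<subseteq> U" using rpos by (auto simp: U_def infdist_zero)
  obtain V where V: "open V" "x \<in> V" "\<forall>z\<in>X \<inter> V. F z \<subseteq> U"
    using usc xX oU FU unfolding usc_setvalued_def by metis
  have "eventually (\<lambda>n. xs n \<in> V) sequentially"
    using topological_tendstoD[OF xl V(1,2)] .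
  then have ev: "eventually (\<lambda>n. infdist (ys n) (F x) \<le> r/2) sequentially"
    by eventually_elim (use V(3) xs ys in \<open>force simp: U_def\<close>)
  have "(\<lambda>n. infdist (ys n) (F x)) \<longlonglongrightarrow> infdist y (F x)"
    by (intro tendsto_infdist yl)
  then have "r \<le> r/2" unfolding r_def using ev
    by (intro tendsto_upperbound) (auto simp: r_def)
  then show False using rpos by simp
qed

lemma compact_inv_lim:
  fixes X :: "'a::metric_space set"
  assumes X: "compact X" and usc: "usc_setvalued X F"
  shows "compact (inv_lim X F)"
proof -
  have "compactin (product_topology (\<lambda>i. euclidean) UNIV) (PiE UNIV (\<lambda>_::nat. X))"
    using X by (simp add: compactin_PiE)
  then have cP: "compact (PiE UNIV (\<lambda>_::nat. X))"
    by (simp add: euclidean_product_topology)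
  have sub: "inv_lim X F \<subseteq> PiE UNIV (\<lambda>_::nat. X)"
    by (auto simp: inv_lim_def)
  have coord: "(\<lambda>n. f n i) \<longlonglongrightarrow> l i" if "f \<longlonglongrightarrow> l" for f :: "nat \<Rightarrow> nat \<Rightarrow> 'a" and l i
    using continuous_on_tendsto_compose[OF continuous_on_product_coordinates[of i] that] by simp
  have cl: "closed (inv_lim X F)"
    unfolding closed_sequential_limits
  proof (intro allI impI, elim conjE)
    fix f l assume f: "\<forall>n. f n \<in> inv_lim X F" and fl: "f \<longlonglongrightarrow> l"
    have cX: "closed X" using X compact_imp_closed by auto
    have lX: "l i \<in> X" for i
      using closed_sequentially[OF cX, of "\<lambda>n. f n i"] f coord[OF fl, of i] by (auto simp: inv_lim_def)
    have "l i \<in> F (l (Suc i))" for i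
      by (rule usc_setvalued_closed_graph[OF cX usc, of "\<lambda>n. f n (Suc i)" _ "\<lambda>n. f n i"])
        (use f coord[OF fl] in \<open>auto simp: inv_lim_def\<close>)
    then show "l \<in> inv_lim X F" using lX by (auto simp: inv_lim_def)
  qed
  show ?thesis using compact_Int_closed[OF cP cl] sub by (simp add: Int_absorb1)
qed

lemma equivalent_metric_uniformly_continuous:
  fixes S :: "'a::metric_space set"
  assumes "compact S" and "Metric_space S \<rho>"
    and top: "Metric_space.mtopology S \<rho> = top_of_set S" and "\<epsilon> > 0"
  obtains \<delta> where "\<delta> > 0" and "\<And>x y. x \<in> S \<Longrightarrow> y \<in> S \<Longrightarrow> dist x y < \<delta> \<Longrightarrow> \<rho> x y < \<epsilon>"
proof -
  interpret Metric_space S \<rho> by fact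
  have "uniformly_continuous_map (submetric euclidean_metric S) (metric (S, \<rho>)) (\<lambda>x. x)"
    by (rule continuous_imp_uniformly_continuous_map)
      (simp add: mtopology_of_submetric top compact_space_subtopology \<open>compact S\<close>)
  then show ?thesis
    using that \<open>\<epsilon> > 0\<close> unfolding uniformly_continuous_map_def by (auto simp: dist_commute)
qed

lemma dist_fun_less_if_initial_coordinates_close:
  fixes \<delta> :: real
  assumes "\<delta> > 0"
  obtains K \<eta> where "\<eta> > 0"
    "\<And>x y :: nat \<Rightarrow> 'a::metric_space. (\<And>k. k \<le> K \<Longrightarrow> dist (x k) (y k) < \<eta>) \<Longrightarrow> dist x y < \<delta>"
proof -
  \<comment> \<open>The metric on \<open>nat \<Rightarrow> 'a\<close> weights the coordinate \<open>from_nat n\<close> by \<open>(1/2)^n\<close>.\<close>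
  obtain N where N: "(1/2::real) ^ N < \<delta>/2"
    using real_arch_pow_inv[of "\<delta>/2" "1/2::real"] assms by auto
  define K where "K = Max ((from_nat :: nat \<Rightarrow> nat) ` {..N})"
  have "dist x y < \<delta>" if close: "\<And>k. k \<le> K \<Longrightarrow> dist (x k) (y k) < \<delta>/4" for x y :: "nat \<Rightarrow> 'a"
  proof -
    have "dist (x (from_nat n)) (y (from_nat n)) < \<delta>/4" if "n \<le> N" for n
      by (rule close) (use that in \<open>simp add: K_def\<close>)
    then have "Max {dist (x (from_nat n)) (y (from_nat n)) |n. n \<le> N} < \<delta>/4"
      by (subst Max_less_iff) auto
    then show ?thesis
      using dist_fun_le_dist_first_terms[of x y N] N by linarith
  qed
  then show ?thesis
    using that[of "\<delta>/4" K] assms by auto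
qed

lemma gamma_map_subset_inv_lim:
  assumes "usc_setvalued X F" and "x \<in> inv_lim X F"
  shows "gamma_map F x \<subseteq> inv_lim X F"
proof
  fix x'' assume "x'' \<in> gamma_map F x"
  then obtain x' where x'': "x'' = (\<lambda>i. if i = 0 then x' else x (i - 1))" and "x' \<in> F (x 0)"
    by (auto simp: gamma_map_def)
  moreover have "x' \<in> X"
    using assms \<open>x' \<in> F (x 0)\<close> by (auto simp: inv_lim_def usc_setvalued_def)
  ultimately show "x'' \<in> inv_lim X F"
    using assms(2) by (auto simp: inv_lim_def gr0_conv_Suc)
qed

lemma orbit_of_gamma_mapD:
  assumes "orbit_of (gamma_map F) y orb"
  shows "orb (Suc j) (Suc k) = orb j k" and "orb (Suc j) 0 \<in> F (orb j 0)"
proof -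
  obtain x' where "orb (Suc j) = (\<lambda>i. if i = 0 then x' else orb j (i - 1))" "x' \<in> F (orb j 0)"
    using assms by (auto simp: orbit_of_def gamma_map_def)
  then show "orb (Suc j) (Suc k) = orb j k" and "orb (Suc j) 0 \<in> F (orb j 0)"
    by simp_all
qed

lemma orbit_of_in:
  assumes "orbit_of G z zs" and "z \<in> Y" and "\<And>y. y \<in> Y \<Longrightarrow> G y \<subseteq> Y"
  shows "zs t \<in> Y"
  using assms by (induction t) (auto simp: orbit_of_def)

lemma orbit_of_gamma_map_unroll:
  assumes y: "y \<in> inv_lim X F" and orb: "orbit_of (gamma_map F) y orb"
  obtains u where "orbit_of F (y K) u" and "\<And>j k. k \<le> j + K \<Longrightarrow> orb j k = u (j + K - k)"
proof
  define u where "u t = (if t \<le> K then y (K - t) else orb (t - K) 0)" for t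
  have orb0: "orb 0 = y"
    using orb by (simp add: orbit_of_def)
  have shift: "orb (j + m) (k + m) = orb j k" for j k m
    by (induction m) (simp_all add: orbit_of_gamma_mapD(1)[OF orb])
  show "orbit_of F (y K) u"
    unfolding orbit_of_def
  proof (intro conjI allI)
    fix t
    consider "Suc t \<le> K" | "t = K" | "K < t" by linarith
    then show "u (Suc t) \<in> F (u t)"
    proof cases
      case 1
      then have "K - t = Suc (K - Suc t)" by arith
      then show ?thesis using 1 y by (simp add: u_def inv_lim_def)
    next
      case 2
      then show ?thesis using orbit_of_gamma_mapD(2)[OF orb, of 0] by (simp add: u_def orb0)
    next
      case 3
      then have "Suc t - K = Suc (t - K)" by arith
      then show ?thesis using 3 orbit_of_gamma_mapD(2)[OF orb] by (simp add: u_def)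
    qed
  qed (simp add: u_def)
  show "orb j k = u (j + K - k)" if "k \<le> j + K" for j k
  proof (cases "k \<le> j")
    case True
    then have "orb j k = orb (j - k) 0"
      using shift[where j = "j - k" and k = 0 and m = k] by simp
    then show ?thesis
      using True by (cases "j = k") (auto simp: u_def orb0)
  next
    case False
    then show ?thesis
      using shift[where j = 0 and k = "k - j" and m = j] that by (simp add: u_def orb0)
  qed
qed

lemma orbit_of_mod:
  assumes zs: "orbit_of G z zs" and "zs P = z" and "0 < P"
  shows "orbit_of G z (\<lambda>t. zs (t mod P))"
  unfolding orbit_of_def
proof (intro conjI allI)
  fix t
  define q where "q = t mod P"
  have "q < P" and Suc_mod: "Suc t mod P = Suc q mod P"
    using \<open>0 < P\<close> by (simp_all add: q_def mod_Suc_eq)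
  have "zs (Suc q mod P) = zs (Suc q)"
  proof (cases "Suc q = P")
    case True
    then show ?thesis using \<open>zs P = z\<close> zs by (simp add: orbit_of_def)
  next
    case False
    then show ?thesis using \<open>q < P\<close> by simp
  qed
  then show "zs (Suc t mod P) \<in> G (zs (t mod P))"
    using zs by (simp add: Suc_mod q_def orbit_of_def)
qed (use zs in \<open>simp add: orbit_of_def\<close>)

lemma periodic_add_mult:
  fixes w :: "nat \<Rightarrow> 'a"
  assumes periodic: "\<And>t. w (t + P) = w t"
  shows "w (t + P * m) = w t"
proof (induction m)
  case (Suc m)
  have "t + P * Suc m = (t + P * m) + P" by simp
  then show ?case using Suc periodic by presburger
qed simp

lemma orbit_of_gamma_map_periodic:
  fixes w :: "nat \<Rightarrow> 'a" and P m d :: nat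
  assumes w: "orbit_of F (w 0) w" and periodic: "\<And>t. w (t + P) = w t"
    and wX: "\<And>t. w t \<in> X" and "0 < P"
  obtains Z where "orbit_of (gamma_map F) (Z 0) Z" and "\<And>j. Z j \<in> inv_lim X F" and "Z P = Z 0"
    and "\<And>j k. k + d \<le> j + m \<Longrightarrow> Z j k = w (j + m - k - d)"
proof -
  define c where "c = m + (P - 1) * d"
  \<comment> \<open>Since \<open>(P - 1) * k \<equiv> -k (mod P)\<close>, this reads w backwards without negative indices.\<close>
  define Z where "Z j k = w (j + c + (P - 1) * k)" for j k
  have Suc_step: "Suc (j + c + (P - 1) * Suc k) = j + c + (P - 1) * k + P" for j k
    using \<open>0 < P\<close> by (cases P) simp_all
  have wF: "w (Suc t) \<in> F (w t)" for t
    using w by (simp add: orbit_of_def)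
  have Z_Suc: "Z j k = w (Suc (j + c + (P - 1) * Suc k))" for j k
    by (simp only: Z_def Suc_step periodic)
  have Z_shift: "Z (Suc j) (Suc k) = Z j k" for j k
    unfolding Z_Suc[of j k] by (simp add: Z_def)
  from Z_Suc have "Z j k \<in> F (Z j (Suc k))" for j k
    using wF unfolding Z_def by metis
  then have Z_inv_lim: "Z j \<in> inv_lim X F" for j
    using wX by (simp add: inv_lim_def Z_def)
  have Z_orbit: "orbit_of (gamma_map F) (Z 0) Z"
    unfolding orbit_of_def
  proof (intro conjI allI)
    fix j
    have "Z (Suc j) = (\<lambda>i. if i = 0 then Z (Suc j) 0 else Z j (i - 1))"
      by (auto simp: fun_eq_iff gr0_conv_Suc Z_shift)
    moreover have "Z (Suc j) 0 \<in> F (Z j 0)"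
      using wF by (simp add: Z_def)
    ultimately show "Z (Suc j) \<in> gamma_map F (Z j)"
      unfolding gamma_map_def by blast
  qed simp
  have Z_periodic: "Z P = Z 0"
  proof
    fix k
    show "Z P k = Z 0 k"
      using periodic[of "c + (P - 1) * k"] by (simp add: Z_def ac_simps)
  qed
  have Z_w: "Z j k = w (j + m - k - d)" if "k + d \<le> j + m" for j k
  proof -
    have "j + c + (P - 1) * k = (j + m - k - d) + P * (k + d)"
      using that \<open>0 < P\<close> by (cases P) (auto simp: c_def algebra_simps)
    then show ?thesis
      using periodic_add_mult[where w = w, OF periodic] by (simp add: Z_def)
  qed
  show thesis
    using that[OF Z_orbit Z_inv_lim Z_periodic Z_w] .
qed

lemma separated_intervals_mono:
  fixes a b :: "nat \<Rightarrow> nat"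
  assumes ab: "\<forall>i\<in>{1..n}. a i \<le> b i" and gap: "\<forall>i. 1 \<le> i \<and> i < n \<longrightarrow> b i < a (Suc i)"
    and "1 \<le> i" and "i \<le> j" and "j \<le> n"
  shows "a i \<le> a j \<and> b i \<le> b j"
  using \<open>i \<le> j\<close> \<open>j \<le> n\<close>
proof (induction j rule: dec_induct)
  case (step m)
  then have "a m \<le> b m" "b m < a (Suc m)" "a (Suc m) \<le> b (Suc m)"
    using ab gap \<open>1 \<le> i\<close> by auto
  then show ?case using step by linarith
qed simp

definition specification_gap :: "'b set \<Rightarrow> ('b \<Rightarrow> 'b \<Rightarrow> bool) \<Rightarrow> ('b \<Rightarrow> 'b set) \<Rightarrow> nat \<Rightarrow> bool" where
  "specification_gap Y close G M \<longleftrightarrow>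
    (\<forall>(n::nat) (y::nat \<Rightarrow> 'b) (a::nat \<Rightarrow> nat) (b::nat \<Rightarrow> nat) (orb::nat \<Rightarrow> nat \<Rightarrow> 'b) (P::nat).
      n \<ge> 1 \<and> (\<forall>i\<in>{1..n}. y i \<in> Y) \<and> (\<forall>i\<in>{1..n}. a i \<le> b i) \<and>
      (\<forall>i. 1 \<le> i \<and> i < n \<longrightarrow> b i < a (Suc i) \<and> a (Suc i) - b i > M) \<and>
      (\<forall>i\<in>{1..n}. orbit_of G (y i) (orb i)) \<and> P > M + b n - a 1
      \<longrightarrow> (\<exists>z\<in>Y. \<exists>zs. orbit_of G z zs \<and>
             (\<forall>i\<in>{1..n}. \<forall>j\<in>{a i..b i}. close (zs j) (orb i j)) \<and> zs P = z))"

lemma has_specification_iff_gap: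
  "has_specification Y \<rho> G \<longleftrightarrow> (\<forall>\<epsilon>>0. \<exists>M. specification_gap Y (\<lambda>u v. \<rho> u v < \<epsilon>) G M)"
  by (simp add: has_specification_def specification_gap_def)

lemma specification_gap_mono:
  assumes spec: "specification_gap Y R G M" and G: "\<And>y. y \<in> Y \<Longrightarrow> G y \<subseteq> Y"
    and R: "\<And>u v. u \<in> Y \<Longrightarrow> v \<in> Y \<Longrightarrow> R u v \<Longrightarrow> R' u v"
  shows "specification_gap Y R' G M"
  unfolding specification_gap_def
proof (intro allI impI, elim conjE)
  fix n y a b orb P
  assume hyps: "n \<ge> 1" "\<forall>i\<in>{1..n}. y i \<in> Y" "\<forall>i\<in>{1..n}. a i \<le> b i"
    "\<forall>i. 1 \<le> i \<and> i < n \<longrightarrow> b i < a (Suc i) \<and> a (Suc i) - b i > M"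
    "\<forall>i\<in>{1..n}. orbit_of G (y i) (orb i)" "P > M + b n - a 1"
  then obtain z zs where z: "z \<in> Y" "orbit_of G z zs" "zs P = z"
    and close: "\<forall>i\<in>{1..n}. \<forall>j\<in>{a i..b i}. R (zs j) (orb i j)"
    using spec unfolding specification_gap_def by blast
  have "R' (zs j) (orb i j)" if "i \<in> {1..n}" "j \<in> {a i..b i}" for i j
  proof (rule R)
    show "zs j \<in> Y"
      by (rule orbit_of_in[OF z(2,1) G])
    have "orbit_of G (y i) (orb i)" and "y i \<in> Y"
      using hyps(2,5) that by auto
    then show "orb i j \<in> Y"
      using G by (rule orbit_of_in)
    show "R (zs j) (orb i j)"
      using close that by blast
  qed
  then show "\<exists>z\<in>Y. \<exists>zs. orbit_of G z zs \<and> (\<forall>i\<in>{1..n}. \<forall>j\<in>{a i..b i}. R' (zs j) (orb i j)) \<and> zs P = z"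
    using z by blast
qed

lemma specification_gap_periodic_orbit:
  assumes spec: "specification_gap X R F M" and F: "\<And>x. x \<in> X \<Longrightarrow> F x \<subseteq> X"
    and "n \<ge> 1" and "\<forall>i\<in>{1..n}. u i 0 \<in> X" and "\<forall>i\<in>{1..n}. orbit_of F (u i 0) (u i)"
    and "\<forall>i\<in>{1..n}. a i \<le> b i"
    and "\<forall>i. 1 \<le> i \<and> i < n \<longrightarrow> b i < a (Suc i) \<and> a (Suc i) - b i > M"
    and P: "P > M + b n - a 1"
  obtains w where "orbit_of F (w 0) w" and "\<And>t. w (t + P) = w t" and "\<And>t. w t \<in> X"
    and "\<And>i t. i \<in> {1..n} \<Longrightarrow> t \<in> {a i..b i} \<Longrightarrow> t < P \<Longrightarrow> R (w t) (u i t)"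
proof -
  obtain z zs where z: "z \<in> X" "orbit_of F z zs" "zs P = z"
    and close: "\<forall>i\<in>{1..n}. \<forall>t\<in>{a i..b i}. R (zs t) (u i t)"
    using spec[unfolded specification_gap_def, rule_format, of n "\<lambda>i. u i 0" a b u P] assms(3-8)
    by blast
  have "0 < P" using P by linarith
  show ?thesis
  proof (rule that[of "\<lambda>t. zs (t mod P)"])
    show "orbit_of F (zs (0 mod P)) (\<lambda>t. zs (t mod P))"
      using orbit_of_mod[OF z(2,3) \<open>0 < P\<close>] z(2) by (simp add: orbit_of_def)
    show "zs (t mod P) \<in> X" for t
      using orbit_of_in[OF z(2,1) F] .
  qed (use close in auto)
qed

text \<open>Time is shifted by a 1 so that all shadowed indices stay below the period P.\<close>

lemma specification_gap_periodic_orbit_extended_windows: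
  assumes spec: "specification_gap X R F M" and F: "\<And>x. x \<in> X \<Longrightarrow> F x \<subseteq> X"
    and n: "n \<ge> 1" and uX: "\<And>i t. i \<in> {1..n} \<Longrightarrow> u i t \<in> X"
    and u: "\<And>i. i \<in> {1..n} \<Longrightarrow> orbit_of F (u i 0) (u i)"
    and ab: "\<forall>i\<in>{1..n}. a i \<le> b i"
    and gap: "\<forall>i. 1 \<le> i \<and> i < n \<longrightarrow> b i < a (Suc i) \<and> a (Suc i) - b i > M + K"
    and P: "P > M + K + b n - a 1"
  obtains w where "orbit_of F (w 0) w" and "\<And>t. w (t + P) = w t" and "\<And>t. w t \<in> X"
    and "\<And>i j k. i \<in> {1..n} \<Longrightarrow> j \<in> {a i..b i} \<Longrightarrow> k \<le> K
           \<Longrightarrow> R (w (j + K - k - a 1)) (u i (j + K - k))"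
proof -
  have first_last: "a 1 \<le> a i" "b i \<le> b n" if "i \<in> {1..n}" for i
    using separated_intervals_mono[OF ab, of 1 i] separated_intervals_mono[OF ab, of i n] gap that
    by auto
  have "a 1 \<le> b n"
    using first_last(2)[of 1] ab n by force
  obtain w where w: "orbit_of F (w 0) w" "\<And>t. w (t + P) = w t" "\<And>t. w t \<in> X"
    and track: "\<And>i t. i \<in> {1..n} \<Longrightarrow> t \<in> {a i - a 1..b i + K - a 1} \<Longrightarrow> t < P
                   \<Longrightarrow> R (w t) (u i (t + a 1))"
  proof (rule specification_gap_periodic_orbit[OF spec F n, where u = "\<lambda>i t. u i (t + a 1)"
        and a = "\<lambda>i. a i - a 1" and b = "\<lambda>i. b i + K - a 1" and P = P])
    show "\<forall>i\<in>{1..n}. orbit_of F (u i (0 + a 1)) (\<lambda>t. u i (t + a 1))"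
      using u by (simp add: orbit_of_def)
    show "\<forall>i. 1 \<le> i \<and> i < n \<longrightarrow> b i + K - a 1 < a (Suc i) - a 1 \<and> M < a (Suc i) - a 1 - (b i + K - a 1)"
    proof (intro allI impI)
      fix i assume i: "1 \<le> i \<and> i < n"
      then have "a 1 \<le> b i" "b i < a (Suc i)" "M + K < a (Suc i) - b i"
        using first_last(1)[of i] ab gap by force+
      then show "b i + K - a 1 < a (Suc i) - a 1 \<and> M < a (Suc i) - a 1 - (b i + K - a 1)"
        by arith
    qed
  qed (use uX ab first_last P \<open>a 1 \<le> b n\<close> in auto)
  have tracked: "R (w (j + K - k - a 1)) (u i (j + K - k))"
    if i: "i \<in> {1..n}" and j: "j \<in> {a i..b i}" and "k \<le> K" for i j k
  proof -
    have "a 1 \<le> j" "j \<le> b n"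
      using first_last[OF i] j by auto
    then have "j + K - k - a 1 \<in> {a i - a 1..b i + K - a 1}" and "j + K - k - a 1 < P"
      and "j + K - k - a 1 + a 1 = j + K - k"
      using j \<open>k \<le> K\<close> P by auto
    then have "R (w (j + K - k - a 1)) (u i (j + K - k - a 1 + a 1))"
      by (intro track[OF i])
    then show ?thesis
      unfolding \<open>j + K - k - a 1 + a 1 = j + K - k\<close> .
  qed
  show ?thesis
    using that[OF w tracked] .
qed

lemma gamma_map_specification_gap:
  assumes usc: "usc_setvalued X F" and spec: "specification_gap X (\<lambda>u v. dist u v < \<eta>) F M"
  shows "specification_gap (inv_lim X F) (\<lambda>x x'. \<forall>k\<le>K. dist (x k) (x' k) < \<eta>) (gamma_map F) (M + K)"
  unfolding specification_gap_def
proof (intro allI impI, elim conjE)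
  fix n y a b orb P
  assume n: "n \<ge> 1" and y: "\<forall>i\<in>{1..n}. y i \<in> inv_lim X F" and ab: "\<forall>i\<in>{1..n}. a i \<le> b i"
    and gap: "\<forall>i. 1 \<le> i \<and> i < n \<longrightarrow> b i < a (Suc i) \<and> a (Suc i) - b i > M + K"
    and orb: "\<forall>i\<in>{1..n}. orbit_of (gamma_map F) (y i) (orb i)" and P: "P > M + K + b n - a 1"
  have F: "\<And>x. x \<in> X \<Longrightarrow> F x \<subseteq> X"
    using usc by (simp add: usc_setvalued_def)
  have "\<forall>i\<in>{1..n}. \<exists>v. orbit_of F (y i K) v \<and> (\<forall>j k. k \<le> j + K \<longrightarrow> orb i j k = v (j + K - k))"
    using orbit_of_gamma_map_unroll y orb by metis
  then obtain u where u: "\<And>i. i \<in> {1..n} \<Longrightarrow> orbit_of F (y i K) (u i)"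
    and orb_u: "\<And>i j k. i \<in> {1..n} \<Longrightarrow> k \<le> j + K \<Longrightarrow> orb i j k = u i (j + K - k)"
    by metis
  have uX: "u i t \<in> X" if "i \<in> {1..n}" for i t
    using orbit_of_in[OF u[OF that] _ F] y that by (auto simp: inv_lim_def)
  have u0: "orbit_of F (u i 0) (u i)" if "i \<in> {1..n}" for i
    using u[OF that] by (simp add: orbit_of_def)
  obtain w where w: "orbit_of F (w 0) w" "\<And>t. w (t + P) = w t" "\<And>t. w t \<in> X"
    and track: "\<And>i j k. i \<in> {1..n} \<Longrightarrow> j \<in> {a i..b i} \<Longrightarrow> k \<le> K
                  \<Longrightarrow> dist (w (j + K - k - a 1)) (u i (j + K - k)) < \<eta>"
    using specification_gap_periodic_orbit_extended_windows[where u = u, OF spec F n uX u0 ab gap P]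
    by blast
  have "0 < P"
    using P by linarith
  obtain Z where Z: "orbit_of (gamma_map F) (Z 0) Z" "\<And>j. Z j \<in> inv_lim X F" "Z P = Z 0"
      and Z_w: "\<And>j k. k + a 1 \<le> j + K \<Longrightarrow> Z j k = w (j + K - k - a 1)"
    using orbit_of_gamma_map_periodic[OF w \<open>0 < P\<close>, where m = K and d = "a 1"] by metis
  have "dist (Z j k) (orb i j k) < \<eta>"
    if "i \<in> {1..n}" and "j \<in> {a i..b i}" and "k \<le> K" for i j k
  proof -
    have "a 1 \<le> j"
      using separated_intervals_mono[OF ab, of 1 i] gap that by auto
    then have "Z j k = w (j + K - k - a 1)" and "orb i j k = u i (j + K - k)"
      using Z_w orb_u that by auto
    then show ?thesis
      using track[OF that] by simp
  qed
  then show "\<exists>z\<in>inv_lim X F. \<exists>zs. orbit_of (gamma_map F) z zs \<and>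
      (\<forall>i\<in>{1..n}. \<forall>j\<in>{a i..b i}. \<forall>k\<le>K. dist (zs j k) (orb i j k) < \<eta>) \<and> zs P = z"
    using Z by blast
qed

theorem corollary10:
  fixes X :: "'a::metric_space set" and F :: "'a \<Rightarrow> 'a set"
    and \<rho> :: "(nat \<Rightarrow> 'a) \<Rightarrow> (nat \<Rightarrow> 'a) \<Rightarrow> real"
  assumes "compact X"
    and "usc_setvalued X F"
    and "has_specification X dist F"
    and "Metric_space (inv_lim X F) \<rho>"
    and "Metric_space.mtopology (inv_lim X F) \<rho> = top_of_set (inv_lim X F)"
  shows "has_specification (inv_lim X F) \<rho> (gamma_map F)"
proof -
  let ?S = "inv_lim X F"
  have "\<exists>M. specification_gap ?S (\<lambda>x x'. \<rho> x x' < \<epsilon>) (gamma_map F) M" if "\<epsilon> > 0" for \<epsilon>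
  proof -
    obtain \<delta> where "\<delta> > 0" and \<delta>: "\<And>x y. x \<in> ?S \<Longrightarrow> y \<in> ?S \<Longrightarrow> dist x y < \<delta> \<Longrightarrow> \<rho> x y < \<epsilon>"
      using equivalent_metric_uniformly_continuous[OF compact_inv_lim[OF assms(1,2)] assms(4,5) \<open>\<epsilon> > 0\<close>] by blast
    obtain K \<eta> where "\<eta> > 0"
      and coords: "\<And>x y :: nat \<Rightarrow> 'a. (\<And>k. k \<le> K \<Longrightarrow> dist (x k) (y k) < \<eta>) \<Longrightarrow> dist x y < \<delta>"
      using dist_fun_less_if_initial_coordinates_close[OF \<open>\<delta> > 0\<close>] by metis
    obtain M where "specification_gap X (\<lambda>u v. dist u v < \<eta>) F M"
      using assms(3) \<open>\<eta> > 0\<close> by (auto simp: has_specification_iff_gap)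
    then have "specification_gap ?S (\<lambda>x x'. \<forall>k\<le>K. dist (x k) (x' k) < \<eta>) (gamma_map F) (M + K)"
      by (rule gamma_map_specification_gap[OF assms(2)])
    then have "specification_gap ?S (\<lambda>x x'. \<rho> x x' < \<epsilon>) (gamma_map F) (M + K)"
      by (rule specification_gap_mono[OF _ gamma_map_subset_inv_lim[OF assms(2)]]) (auto intro: \<delta> coords)
    then show ?thesis ..
  qed
  then show ?thesis
    by (simp add: has_specification_iff_gap)
qed

end
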